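(* Let $\Psi:\mathbb{R}^n\to\mathbb{R}$ be convex and twice continuously differentiable, let $s:\mathbb{R}^n\to\mathbb{R}^m$ ($m\ge n$) have continuously differentiable component functions with Jacobian $J(x)\in\mathbb{R}^{m\times n}$, let $b\in\mathbb{R}^m$, $\sigma>0$, and $c(x)=\frac12\|s(x)-b\|^2-\frac{\sigma^2}{2}$, so $\nabla c(x)=J(x)^T(s(x)-b)$. Let $x^*\in\mathbb{R}^n$ and $\rho>0$ be such that for every $x$ in the open ball $\mathcal{B}_\rho(x^* )$ there exists $(p,\lambda)\in\mathbb{R}^n\times\mathbb{R}$, $\lambda>0$, solving $$\nabla\Psi(x+p)+\lambda\big(\nabla c(x)+J(x)^TJ(x)p\big)=0,\qquad c(x)+\nabla c(x)^Tp+\tfrac12 p^TJ(x)^TJ(x)p=0. \quad ( * )$$ Then for every $x\in\mathcal{B}_\rho(x^* )$, with $(p,\lambda)$ a solution of $( * )$ at $x$, there exists a constant $\phi>0$ such that for all $\beta\in[0,1]$ $$\Psi(x+\beta p)-\Psi(x)\le-\frac{\beta\lambda}{2}p^TJ(x)^TJ(x)p+\lambda\beta c(x)+\phi\beta^2\|p\|^2.$$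
   Context: $\|\cdot\|$ is the Euclidean norm. Such $x^*,\rho$ exist e.g. near a KKT point $(x^*,\lambda^* )$ with $\lambda^*>0$, $\nabla c(x^* )\ne0$ and $\nabla^2\Psi(x^* )+\lambda^*J(x^* )^TJ(x^* )$ positive definite. *)

theory Defs
  imports "HOL-Analysis.Analysis"
begin

end

theory Submission
  imports Defs
begin

text \<open>
  Convexity makes the gradient monotone, so \<open>\<nabla>\<Psi>(x)\<^sup>T p \<le> \<nabla>\<Psi>(x+p)\<^sup>T p\<close>, and the two
  equations of the system evaluate the right-hand side to \<open>-\<lambda>/2 p\<^sup>TJ\<^sup>TJp + \<lambda> c(x)\<close>.
  Along the segment from \<open>x\<close> to \<open>x + p\<close>, the tangent inequality at \<open>x + \<beta>p\<close> gives
  \<open>\<Psi>(x+\<beta>p) - \<Psi>(x) \<le> \<beta> \<nabla>\<Psi>(x+\<beta>p)\<^sup>T p\<close>, and since the Hessian is continuous the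
  directional derivative \<open>\<nabla>\<Psi>(x+tp)\<^sup>T p\<close> grows at most linearly in \<open>t\<close> on \<open>[0,1]\<close>;
  this produces the \<open>\<phi>\<beta>\<^sup>2\<parallel>p\<parallel>\<^sup>2\<close> term.
\<close>

lemma convex_on_above_tangent_inner:
  fixes f :: "'a::real_inner \<Rightarrow> real"
  assumes convex: "convex_on UNIV f"
    and deriv: "\<And>x. (f has_derivative (\<lambda>h. G x \<bullet> h)) (at x)"
  shows "G z \<bullet> (y - z) \<le> f y - f z"
proof -
  define d where "d = y - z"
  define h where "h t = f (z + t *\<^sub>R d)" for t :: real
  have "convex_on UNIV h"
  proof (rule convex_onI)
    fix t a b :: real
    assume t: "0 < t" "t < 1"
    have "z + ((1 - t) *\<^sub>R a + t *\<^sub>R b) *\<^sub>R d = (1 - t) *\<^sub>R (z + a *\<^sub>R d) + t *\<^sub>R (z + b *\<^sub>R d)"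
      by (simp add: algebra_simps)
    then show "h ((1 - t) *\<^sub>R a + t *\<^sub>R b) \<le> (1 - t) * h a + t * h b"
      unfolding h_def using convex_onD[OF convex, of t "z + a *\<^sub>R d" "z + b *\<^sub>R d"] t by simp
  qed simp
  moreover have "(h has_field_derivative (G z \<bullet> d)) (at 0)"
  proof -
    have "((\<lambda>t. z + t *\<^sub>R d) has_derivative (\<lambda>t. t *\<^sub>R d)) (at 0)"
      by (auto intro!: derivative_eq_intros)
    from has_derivative_compose[OF this deriv[of "z + 0 *\<^sub>R d"]]
    have "(h has_derivative (\<lambda>t. G z \<bullet> (t *\<^sub>R d))) (at 0)"
      unfolding h_def o_def by simp
    then show ?thesis
      by (simp add: has_field_derivative_def mult_commute_abs)
  qed
  ultimately have "G z \<bullet> d \<le> h 1 - h 0"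
    using convex_on_imp_above_tangent[of UNIV h 0 1] by simp
  then show ?thesis
    unfolding h_def d_def by simp
qed

lemma convex_on_gradient_monotone:
  fixes f :: "'a::real_inner \<Rightarrow> real"
  assumes "convex_on UNIV f"
    and "\<And>x. (f has_derivative (\<lambda>h. G x \<bullet> h)) (at x)"
  shows "G x \<bullet> (y - x) \<le> G y \<bullet> (y - x)"
  using convex_on_above_tangent_inner[OF assms, of x y] convex_on_above_tangent_inner[OF assms, of y x]
  by (simp add: inner_diff_right)

lemma le_linear_bound_if_continuous_deriv:
  fixes g g' :: "real \<Rightarrow> real"
  assumes "a \<le> b"
    and deriv: "\<And>t. t \<in> {a..b} \<Longrightarrow> (g has_real_derivative g' t) (at t)"
    and cont: "continuous_on {a..b} g'"
  shows "\<exists>K. \<forall>t\<in>{a..b}. g t \<le> g a + K * (t - a)"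
proof -
  obtain t0 where "t0 \<in> {a..b}" and max: "\<And>t. t \<in> {a..b} \<Longrightarrow> g' t \<le> g' t0"
    using continuous_attains_sup[OF compact_Icc _ cont] \<open>a \<le> b\<close> by auto
  have "g t \<le> g a + g' t0 * (t - a)" if t: "t \<in> {a..b}" for t
  proof (cases "t = a")
    case False
    then have "a < t" using t by simp
    then obtain z where z: "a < z" "z < t" "g t - g a = (t - a) * g' z"
      using MVT2[of a t g g'] deriv t by force
    have "g' z * (t - a) \<le> g' t0 * (t - a)"
      using max z t by (simp add: mult_right_mono)
    moreover have "g t = g a + g' z * (t - a)"
      using z(3) by (simp add: algebra_simps)
    ultimately show ?thesis by linarith
  qed simp
  then show ?thesis by blast
qed

lemma convex_on_step_quadratic_bound:
  fixes f :: "real^'n \<Rightarrow> real"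
    and G :: "real^'n \<Rightarrow> real^'n"
    and H :: "real^'n \<Rightarrow> real^'n^'n"
  assumes convex: "convex_on UNIV f"
    and f_deriv: "\<And>x. (f has_derivative (\<lambda>h. G x \<bullet> h)) (at x)"
    and G_deriv: "\<And>x. (G has_derivative (\<lambda>h. H x *v h)) (at x)"
    and H_cont: "continuous_on UNIV H"
  shows "\<exists>phi > 0. \<forall>beta \<in> {0..1}.
    f (x + beta *\<^sub>R p) - f x \<le> beta * (G x \<bullet> p) + phi * beta^2 * (norm p)^2"
proof -
  define g where "g t = G (x + t *\<^sub>R p) \<bullet> p" for t :: real
  define g' where "g' t = (H (x + t *\<^sub>R p) *v p) \<bullet> p" for t :: real
  have "(g has_real_derivative g' t) (at t)" for t
  proof -
    have "((\<lambda>t. x + t *\<^sub>R p) has_derivative (\<lambda>t. t *\<^sub>R p)) (at t)"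
      by (auto intro!: derivative_eq_intros)
    from has_derivative_compose[OF this G_deriv[of "x + t *\<^sub>R p"]]
    have "(g has_derivative (\<lambda>s. (H (x + t *\<^sub>R p) *v (s *\<^sub>R p)) \<bullet> p)) (at t)"
      unfolding g_def o_def by (auto intro!: derivative_eq_intros)
    then show ?thesis
      by (simp add: has_field_derivative_def g'_def matrix_vector_mult_scaleR mult_commute_abs)
  qed
  moreover have "continuous_on {0..1} g'"
  proof -
    have "continuous_on {0..1} (\<lambda>t. H (x + t *\<^sub>R p))"
      by (rule continuous_on_compose2[OF H_cont]) (auto intro!: continuous_intros)
    then show ?thesis
      unfolding g'_def matrix_vector_mult_def inner_vec_def by (auto intro!: continuous_intros)
  qed
  ultimately obtain K where K: "\<forall>t\<in>{0..1}. g t \<le> g 0 + K * t"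
    using le_linear_bound_if_continuous_deriv[of 0 1 g g'] by auto
  have step: "f (x + beta *\<^sub>R p) - f x \<le> beta * (G x \<bullet> p) + \<bar>K\<bar> * beta^2"
    if beta: "beta \<in> {0..1}" for beta
  proof -
    have "G (x + beta *\<^sub>R p) \<bullet> (x - (x + beta *\<^sub>R p)) \<le> f x - f (x + beta *\<^sub>R p)"
      by (rule convex_on_above_tangent_inner[OF convex f_deriv])
    then have "f (x + beta *\<^sub>R p) - f x \<le> beta * g beta"
      unfolding g_def by (simp add: inner_minus_right)
    also have "\<dots> \<le> beta * (g 0 + K * beta)"
      using K beta by (simp add: mult_left_mono)
    also have "\<dots> = beta * (G x \<bullet> p) + K * beta^2"
      unfolding g_def by (simp add: algebra_simps power2_eq_square)
    also have "\<dots> \<le> beta * (G x \<bullet> p) + \<bar>K\<bar> * beta^2"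
      by (simp add: mult_right_mono)
    finally show ?thesis .
  qed
  show ?thesis
  proof (cases "p = 0")
    case True
    then show ?thesis by (intro exI[of _ 1]) simp
  next
    case False
    then have np: "(norm p)^2 > 0" by simp
    define phi where "phi = (\<bar>K\<bar> + 1) / (norm p)^2"
    show ?thesis
    proof (intro exI[of _ phi] conjI ballI)
      show "phi > 0"
        using np by (simp add: phi_def add_pos_nonneg)
    next
      fix beta :: real
      assume beta: "beta \<in> {0..1}"
      have "\<bar>K\<bar> * beta^2 \<le> phi * beta^2 * (norm p)^2"
        using np by (simp add: phi_def mult_right_mono)
      with step[OF beta]
      show "f (x + beta *\<^sub>R p) - f x \<le> beta * (G x \<bullet> p) + phi * beta^2 * (norm p)^2"
        by linarith
    qed
  qed
qed

lemma inner_step_of_stationarity: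
  fixes G g v p :: "'a::real_inner"
  assumes "G + lam *\<^sub>R (g + v) = 0"
    and "cx + g \<bullet> p + (1/2) * (p \<bullet> v) = 0"
  shows "G \<bullet> p = - (lam / 2) * (p \<bullet> v) + lam * cx"
proof -
  have "G = - (lam *\<^sub>R (g + v))"
    using assms(1) by (simp add: eq_neg_iff_add_eq_0)
  then have "G \<bullet> p = - lam * (g \<bullet> p + p \<bullet> v)"
    by (simp add: inner_add_right inner_commute)
  moreover have "g \<bullet> p = - cx - (p \<bullet> v) / 2"
    using assms(2) by simp
  ultimately show ?thesis
    by (simp add: algebra_simps)
qed

theorem lemma4:
  fixes Psi :: "real^'n \<Rightarrow> real"
    and gradPsi :: "real^'n \<Rightarrow> real^'n"
    and HPsi :: "real^'n \<Rightarrow> real^'n^'n"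
    and s :: "real^'n \<Rightarrow> real^'m"
    and J :: "real^'n \<Rightarrow> real^'n^'m"
    and b :: "real^'m" and sigma rho :: real
    and c :: "real^'n \<Rightarrow> real" and gradc :: "real^'n \<Rightarrow> real^'n"
    and xstar :: "real^'n"
  assumes mn: "CARD('m) \<ge> CARD('n)"
    and convex: "convex_on UNIV Psi"
    and Psi_deriv: "\<And>x. (Psi has_derivative (\<lambda>h. gradPsi x \<bullet> h)) (at x)"
    and gradPsi_deriv: "\<And>x. (gradPsi has_derivative (\<lambda>h. HPsi x *v h)) (at x)"
    and HPsi_cont: "continuous_on UNIV HPsi"
    and s_deriv: "\<And>x. (s has_derivative (\<lambda>h. J x *v h)) (at x)"
    and J_cont: "continuous_on UNIV J"
    and sigma_pos: "sigma > 0"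
    and c_def: "\<And>x. c x = (1/2) * (norm (s x - b))^2 - sigma^2 / 2"
    and gradc_def: "\<And>x. gradc x = transpose (J x) *v (s x - b)"
    and rho_pos: "rho > 0"
    and solvable: "\<forall>x\<in>ball xstar rho. \<exists>p lam. lam > 0 \<and>
        gradPsi (x + p) + lam *\<^sub>R (gradc x + (transpose (J x) ** J x) *v p) = 0 \<and>
        c x + gradc x \<bullet> p + (1/2) * (p \<bullet> ((transpose (J x) ** J x) *v p)) = 0"
  shows "\<forall>x\<in>ball xstar rho. \<forall>p lam. lam > 0 \<and>
        gradPsi (x + p) + lam *\<^sub>R (gradc x + (transpose (J x) ** J x) *v p) = 0 \<and>
        c x + gradc x \<bullet> p + (1/2) * (p \<bullet> ((transpose (J x) ** J x) *v p)) = 0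
      \<longrightarrow> (\<exists>phi > 0. \<forall>beta \<in> {0..1}.
        Psi (x + beta *\<^sub>R p) - Psi x
          \<le> - (beta * lam / 2) * (p \<bullet> ((transpose (J x) ** J x) *v p))
            + lam * beta * c x + phi * beta^2 * (norm p)^2)"
proof (intro ballI allI impI, elim conjE)
  fix x p and lam :: real
  let ?q = "p \<bullet> ((transpose (J x) ** J x) *v p)"
  assume "lam > 0"
    and stationary: "gradPsi (x + p) + lam *\<^sub>R (gradc x + (transpose (J x) ** J x) *v p) = 0"
    and on_model: "c x + gradc x \<bullet> p + (1/2) * ?q = 0"
  from stationary on_model have "gradPsi (x + p) \<bullet> p = - (lam / 2) * ?q + lam * c x"
    by (rule inner_step_of_stationarity)
  moreover have "gradPsi x \<bullet> p \<le> gradPsi (x + p) \<bullet> p"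
    using convex_on_gradient_monotone[OF convex Psi_deriv, of x "x + p"] by simp
  ultimately have slope_bound: "gradPsi x \<bullet> p \<le> - (lam / 2) * ?q + lam * c x"
    by simp
  have slope: "beta * (gradPsi x \<bullet> p) \<le> - (beta * lam / 2) * ?q + lam * beta * c x"
    if "beta \<ge> 0" for beta
  proof -
    have "beta * (gradPsi x \<bullet> p) \<le> beta * (- (lam / 2) * ?q + lam * c x)"
      using mult_left_mono[OF slope_bound that] .
    then show ?thesis
      by (simp add: algebra_simps)
  qed
  obtain phi where "phi > 0" and bound: "\<forall>beta \<in> {0..1}.
      Psi (x + beta *\<^sub>R p) - Psi x \<le> beta * (gradPsi x \<bullet> p) + phi * beta^2 * (norm p)^2"
    using convex_on_step_quadratic_bound[OF convex Psi_deriv gradPsi_deriv HPsi_cont] by blast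
  show "\<exists>phi > 0. \<forall>beta \<in> {0..1}.
      Psi (x + beta *\<^sub>R p) - Psi x \<le> - (beta * lam / 2) * ?q + lam * beta * c x + phi * beta^2 * (norm p)^2"
  proof (intro exI[of _ phi] conjI ballI)
    fix beta :: real
    assume beta: "beta \<in> {0..1}"
    with bound have "Psi (x + beta *\<^sub>R p) - Psi x
        \<le> beta * (gradPsi x \<bullet> p) + phi * beta^2 * (norm p)^2"
      by blast
    with slope[of beta] beta show "Psi (x + beta *\<^sub>R p) - Psi x
        \<le> - (beta * lam / 2) * ?q + lam * beta * c x + phi * beta^2 * (norm p)^2"
      by simp
  qed (fact \<open>phi > 0\<close>)
qed

end
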